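(* Let $\rho\ge1$, $t\in[-1,1]$, $\lambda=\alpha+i\beta$ with $\alpha,\beta\in\mathbb{R}$, and let $\psi=\psi_0+2\sum_{k=1}^K\psi_kT_k$ with $\psi_0,\dots,\psi_K\in\mathbb{C}$. Then $$\sup_{z\in\mathcal{E}_\rho}\Big|\frac{t+1}{2}\exp\Big(\frac{\lambda}{2}(t+1)(1-z)\Big)\psi\Big(\frac{t+1}{2}(z+1)-1\Big)\Big|\le\frac{t+1}{2}\exp\Big(\alpha+\tfrac12\sqrt{\alpha^2(\rho+\rho^{-1})^2+\beta^2(\rho-\rho^{-1})^2}\Big)\Big(|\psi_0|+\sum_{k=1}^K|\psi_k|(\rho^k+\rho^{-k})\Big).$$
   Context: $T_k$ is the Chebyshev polynomial of the first kind, $T_k(\cos\theta)=\cos(k\theta)$, extended to $\mathbb{C}$ as a polynomial. For $\rho\ge1$, $\mathcal{E}_\rho=\{z\in\mathbb{C}:|z-1|+|z+1|<\rho+\rho^{-1}\}$ is the open Bernstein ellipse. *)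

theory Defs
  imports "HOL-Analysis.Analysis"
begin

fun cheb_T :: "nat \<Rightarrow> complex \<Rightarrow> complex" where
  "cheb_T 0 z = 1"
| "cheb_T (Suc 0) z = z"
| "cheb_T (Suc (Suc n)) z = 2 * z * cheb_T (Suc n) z - cheb_T n z"

definition bernstein_ellipse :: "real \<Rightarrow> complex set" where
  "bernstein_ellipse \<rho> = {z. cmod (z - 1) + cmod (z + 1) < \<rho> + inverse \<rho>}"

definition cheb_series :: "nat \<Rightarrow> (nat \<Rightarrow> complex) \<Rightarrow> complex \<Rightarrow> complex" where
  "cheb_series K c z = c 0 + 2 * (\<Sum>k=1..K. c k * cheb_T k z)"

end

theory Submission
  imports Defs
begin

text \<open>Under the Joukowski map \<open>z = (u + u\<inverse>)/2\<close> the focal distance sum of \<open>z\<close> is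
  \<open>|u| + |u|\<inverse>\<close>, so the Bernstein ellipse of parameter \<open>\<rho>\<close> is the image of \<open>1 \<le> |u| < \<rho>\<close>.
  There \<open>2 T\<^sub>k(z) = u\<^sup>k + u\<^sup>-\<^sup>k\<close> is bounded by \<open>\<rho>\<^sup>k + \<rho>\<^sup>-\<^sup>k\<close>, and \<open>-Re(\<lambda>z)\<close> is the
  pairing of \<open>(-\<alpha>(|u| + |u|\<inverse>), \<beta>(|u| - |u|\<inverse>))/2\<close> with the unit vector \<open>u/|u|\<close>, hence by
  Cauchy-Schwarz at most \<open>E\<close>, half the square root in the exponent. With \<open>s = (t+1)/2 \<in> [0,1]\<close>
  the map \<open>z \<mapsto> s(z+1) - 1\<close> contracts towards the focus \<open>-1\<close> and so keeps the ellipse inside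
  itself, which bounds the Chebyshev series; the exponent is \<open>s(\<alpha> - Re(\<lambda>z)) \<le> s(\<alpha> + E) \<le> \<alpha> + E\<close>
  because \<open>|\<alpha>| \<le> E\<close>.\<close>

lemma plus_inverse_le_plus_inverse_iff:
  fixes a b :: real
  assumes "1 \<le> a" "1 \<le> b"
  shows "a + inverse a \<le> b + inverse b \<longleftrightarrow> a \<le> b"
proof -
  have diff: "b + inverse b - (a + inverse a) = (b - a) * (a * b - 1) / (a * b)"
    using assms by (simp add: field_simps)
  have ab: "0 < a * b" "1 \<le> a * b"
    using assms mult_mono[of 1 a 1 b] by auto
  show ?thesis
  proof
    assume le: "a + inverse a \<le> b + inverse b"
    show "a \<le> b"
    proof (rule ccontr)
      assume "\<not> a \<le> b"
      then have "1 < a * b"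
        using assms mult_less_le_imp_less[of 1 a 1 b] by simp
      then have "(b - a) * (a * b - 1) / (a * b) < 0"
        using \<open>\<not> a \<le> b\<close> ab by (intro divide_neg_pos mult_neg_pos) auto
      with le diff show False by linarith
    qed
  next
    assume "a \<le> b"
    then have "0 \<le> (b - a) * (a * b - 1) / (a * b)"
      using ab by (intro divide_nonneg_pos mult_nonneg_nonneg) auto
    with diff show "a + inverse a \<le> b + inverse b" by linarith
  qed
qed

lemma joukowski_preimage:
  fixes w :: complex
  obtains u where "u \<noteq> 0" "1 \<le> cmod u" "w = (u + inverse u) / 2"
proof -
  define v where "v = w + csqrt (w\<^sup>2 - 1)"
  have "v * (w - csqrt (w\<^sup>2 - 1)) = 1"
    unfolding v_def by (simp add: algebra_simps power2_eq_square[symmetric])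
  then have v: "v \<noteq> 0" "w = (v + inverse v) / 2"
    by (auto simp: v_def inverse_unique)
  show ?thesis
  proof (cases "1 \<le> cmod v")
    case True
    with v that show ?thesis by blast
  next
    case False
    with v have "1 \<le> cmod (inverse v)"
      by (simp add: norm_inverse one_le_inverse_iff)
    with v that[of "inverse v"] show ?thesis by (auto simp: add.commute)
  qed
qed

lemma focal_sum_joukowski:
  fixes u :: complex
  assumes "u \<noteq> 0"
  shows "cmod ((u + inverse u) / 2 - 1) + cmod ((u + inverse u) / 2 + 1)
           = cmod u + inverse (cmod u)"
proof -
  have minus: "(u + inverse u) / 2 - 1 = (u - 1)\<^sup>2 / (2 * u)"
    and plus: "(u + inverse u) / 2 + 1 = (u + 1)\<^sup>2 / (2 * u)"
    using assms by (simp_all add: field_simps power2_eq_square)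
  have "cmod ((u + inverse u) / 2 - 1) + cmod ((u + inverse u) / 2 + 1)
          = (cmod (u - 1) ^ 2 + cmod (u + 1) ^ 2) / (2 * cmod u)"
    unfolding minus plus by (simp add: norm_divide norm_mult norm_power add_divide_distrib)
  also have "cmod (u - 1) ^ 2 + cmod (u + 1) ^ 2 = 2 * cmod u ^ 2 + 2"
    unfolding cmod_power2 by (simp add: power2_eq_square algebra_simps)
  finally show ?thesis
    using assms by (simp add: field_simps power2_eq_square)
qed

lemma joukowski_norm_le:
  fixes u :: complex and \<rho> :: real
  assumes "u \<noteq> 0" "1 \<le> cmod u" "1 \<le> \<rho>"
    and "cmod ((u + inverse u) / 2 - 1) + cmod ((u + inverse u) / 2 + 1) \<le> \<rho> + inverse \<rho>"
  shows "cmod u \<le> \<rho>"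
  using assms plus_inverse_le_plus_inverse_iff[of "cmod u" \<rho>] by (simp add: focal_sum_joukowski)

lemma Re_Im_joukowski:
  fixes u :: complex
  assumes "u \<noteq> 0"
  shows "Re ((u + inverse u) / 2) = Re (sgn u) * (cmod u + inverse (cmod u)) / 2"
    and "Im ((u + inverse u) / 2) = Im (sgn u) * (cmod u - inverse (cmod u)) / 2"
proof -
  have n: "(Re u)\<^sup>2 + (Im u)\<^sup>2 = (cmod u)\<^sup>2" "cmod u \<noteq> 0"
    using assms by (simp_all add: cmod_power2)
  have "Re ((u + inverse u) / 2) = (Re u + Re u / (cmod u)\<^sup>2) / 2"
    by (simp add: n(1))
  also have "\<dots> = Re (sgn u) * (cmod u + inverse (cmod u)) / 2"
    using n(2) by (simp add: field_simps power2_eq_square)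
  finally show "Re ((u + inverse u) / 2) = Re (sgn u) * (cmod u + inverse (cmod u)) / 2" .
  have "Im ((u + inverse u) / 2) = (Im u - Im u / (cmod u)\<^sup>2) / 2"
    by (simp add: n(1))
  also have "\<dots> = Im (sgn u) * (cmod u - inverse (cmod u)) / 2"
    using n(2) by (simp add: field_simps power2_eq_square)
  finally show "Im ((u + inverse u) / 2) = Im (sgn u) * (cmod u - inverse (cmod u)) / 2" .
qed

lemma cheb_T_joukowski:
  fixes u :: complex
  assumes "u \<noteq> 0"
  shows "w = (u + inverse u) / 2 \<Longrightarrow> 2 * cheb_T k w = u ^ k + inverse u ^ k"
proof (induction k w rule: cheb_T.induct)
  case (3 n w)
  have "2 * cheb_T (Suc (Suc n)) w = (u + inverse u) * (2 * cheb_T (Suc n) w) - 2 * cheb_T n w"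
    using 3(3) by (simp add: algebra_simps)
  also have "\<dots> = (u + inverse u) * (u ^ Suc n + inverse u ^ Suc n) - (u ^ n + inverse u ^ n)"
    using 3(1)[OF 3(3)] 3(2)[OF 3(3)] by simp
  also have "\<dots> = u ^ Suc (Suc n) + inverse u ^ Suc (Suc n)"
    using assms by (simp add: algebra_simps) (simp add: field_simps)
  finally show ?case .
qed (auto simp: algebra_simps)

lemma norm_cheb_T_le:
  fixes w :: complex and \<rho> :: real
  assumes "1 \<le> \<rho>" "cmod (w - 1) + cmod (w + 1) \<le> \<rho> + inverse \<rho>"
  shows "cmod (cheb_T k w) \<le> (\<rho> ^ k + inverse \<rho> ^ k) / 2"
proof -
  obtain u where u: "u \<noteq> 0" "1 \<le> cmod u" "w = (u + inverse u) / 2"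
    by (rule joukowski_preimage)
  with assms have "cmod u \<le> \<rho>" by (blast intro: joukowski_norm_le)
  have "cmod (2 * cheb_T k w) = cmod (u ^ k + inverse u ^ k)"
    by (simp only: cheb_T_joukowski[OF u(1) u(3)])
  also have "\<dots> \<le> cmod u ^ k + inverse (cmod u ^ k)"
    using norm_triangle_ineq[of "u ^ k" "inverse u ^ k"] by (simp add: norm_power norm_inverse power_inverse)
  also have "\<dots> \<le> \<rho> ^ k + inverse (\<rho> ^ k)"
    using plus_inverse_le_plus_inverse_iff[of "cmod u ^ k" "\<rho> ^ k"] u \<open>cmod u \<le> \<rho>\<close> assms(1)
    by (simp add: one_le_power power_mono)
  finally show ?thesis by (simp add: power_inverse)
qed

lemma norm_cheb_series_le:
  fixes w :: complex and \<rho> :: real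
  assumes "1 \<le> \<rho>" "cmod (w - 1) + cmod (w + 1) \<le> \<rho> + inverse \<rho>"
  shows "cmod (cheb_series K c w) \<le> cmod (c 0) + (\<Sum>k=1..K. cmod (c k) * (\<rho> ^ k + inverse \<rho> ^ k))"
proof -
  have "cmod (cheb_series K c w) \<le> cmod (c 0) + cmod (2 * (\<Sum>k=1..K. c k * cheb_T k w))"
    unfolding cheb_series_def by (rule norm_triangle_ineq)
  also have "\<dots> \<le> cmod (c 0) + 2 * (\<Sum>k=1..K. cmod (c k) * cmod (cheb_T k w))"
    using norm_sum[of "\<lambda>k. c k * cheb_T k w" "{1..K}"] by (simp add: norm_mult)
  also have "\<dots> \<le> cmod (c 0) + 2 * (\<Sum>k=1..K. cmod (c k) * ((\<rho> ^ k + inverse \<rho> ^ k) / 2))"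
    using norm_cheb_T_le[OF assms] by (intro add_left_mono mult_left_mono sum_mono) auto
  finally show ?thesis by (simp add: sum_distrib_left)
qed

lemma focal_sum_contraction_le:
  fixes z :: complex and s \<rho> :: real
  assumes "1 \<le> \<rho>" "0 \<le> s" "s \<le> 1" "cmod (z - 1) + cmod (z + 1) \<le> \<rho> + inverse \<rho>"
  defines "w \<equiv> of_real s * (z + 1) - 1"
  shows "cmod (w - 1) + cmod (w + 1) \<le> \<rho> + inverse \<rho>"
proof -
  have "w - 1 = of_real s * (z - 1) - of_real (2 * (1 - s))"
    unfolding w_def by (simp add: algebra_simps)
  then have "cmod (w - 1) \<le> cmod (of_real s * (z - 1)) + cmod (complex_of_real (2 * (1 - s)))"
    by (simp only: norm_triangle_ineq4)
  also have "\<dots> = s * cmod (z - 1) + 2 * (1 - s)"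
    using assms(2,3) by (simp only: norm_mult norm_of_real abs_of_nonneg) simp
  finally have "cmod (w - 1) \<le> s * cmod (z - 1) + 2 * (1 - s)" .
  moreover have "cmod (w + 1) = s * cmod (z + 1)"
    unfolding w_def using assms(2) by (simp add: norm_mult)
  ultimately have "cmod (w - 1) + cmod (w + 1) \<le> s * (cmod (z - 1) + cmod (z + 1)) + (1 - s) * 2"
    by (simp add: algebra_simps)
  also have "\<dots> \<le> s * (\<rho> + inverse \<rho>) + (1 - s) * (\<rho> + inverse \<rho>)"
    using assms plus_inverse_le_plus_inverse_iff[of 1 \<rho>]
    by (intro add_mono[OF mult_left_mono mult_left_mono]) auto
  finally show ?thesis by (simp add: algebra_simps)
qed

lemma mult_add_mult_le_sqrt:
  fixes p q x y :: real
  assumes "x\<^sup>2 + y\<^sup>2 = 1"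
  shows "p * x + q * y \<le> sqrt (p\<^sup>2 + q\<^sup>2)"
proof -
  have "(p * x + q * y)\<^sup>2 = (p\<^sup>2 + q\<^sup>2) * (x\<^sup>2 + y\<^sup>2) - (p * y - q * x)\<^sup>2"
    by (simp add: power2_eq_square algebra_simps)
  then have "(p * x + q * y)\<^sup>2 \<le> p\<^sup>2 + q\<^sup>2"
    using assms by simp
  then show ?thesis
    using real_sqrt_le_mono by fastforce
qed

definition ellipse_exponent :: "real \<Rightarrow> complex \<Rightarrow> real" where
  "ellipse_exponent \<rho> lam =
     sqrt ((Re lam)\<^sup>2 * (\<rho> + inverse \<rho>)\<^sup>2 + (Im lam)\<^sup>2 * (\<rho> - inverse \<rho>)\<^sup>2) / 2"

lemma abs_Re_le_ellipse_exponent: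
  assumes "1 \<le> \<rho>"
  shows "\<bar>Re lam\<bar> \<le> ellipse_exponent \<rho> lam"
proof -
  have "\<bar>Re lam\<bar> * 2 \<le> \<bar>Re lam\<bar> * (\<rho> + inverse \<rho>)"
    using plus_inverse_le_plus_inverse_iff[of 1 \<rho>] assms by (intro mult_left_mono) auto
  also have "\<dots> = sqrt ((Re lam)\<^sup>2 * (\<rho> + inverse \<rho>)\<^sup>2)"
    using assms by (simp add: real_sqrt_mult)
  also have "\<dots> \<le> sqrt ((Re lam)\<^sup>2 * (\<rho> + inverse \<rho>)\<^sup>2 + (Im lam)\<^sup>2 * (\<rho> - inverse \<rho>)\<^sup>2)"
    by (intro real_sqrt_le_mono) simp
  finally show ?thesis unfolding ellipse_exponent_def by simp
qed

lemma neg_Re_mult_le_ellipse_exponent: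
  fixes z lam :: complex and \<rho> :: real
  assumes "1 \<le> \<rho>" "cmod (z - 1) + cmod (z + 1) \<le> \<rho> + inverse \<rho>"
  shows "- Re (lam * z) \<le> ellipse_exponent \<rho> lam"
proof -
  obtain u where u: "u \<noteq> 0" "1 \<le> cmod u" "z = (u + inverse u) / 2"
    by (rule joukowski_preimage)
  with assms have "cmod u \<le> \<rho>" by (blast intro: joukowski_norm_le)
  define P where "P = cmod u + inverse (cmod u)"
  define Q where "Q = cmod u - inverse (cmod u)"
  have "Re z = Re (sgn u) * P / 2" "Im z = Im (sgn u) * Q / 2"
    using Re_Im_joukowski[OF u(1), folded u(3)] unfolding P_def Q_def .
  then have Re_lam_z: "- Re (lam * z) = (- Re lam * P * Re (sgn u) + Im lam * Q * Im (sgn u)) / 2"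
    by (simp add: field_simps del: Re_sgn Im_sgn)
  have "(Re (sgn u))\<^sup>2 + (Im (sgn u))\<^sup>2 = 1"
    using u(1) by (metis cmod_power2 norm_sgn one_power2)
  then have "- Re lam * P * Re (sgn u) + Im lam * Q * Im (sgn u) \<le> sqrt ((- Re lam * P)\<^sup>2 + (Im lam * Q)\<^sup>2)"
    by (rule mult_add_mult_le_sqrt)
  then have CS: "- Re (lam * z) \<le> sqrt ((- Re lam * P)\<^sup>2 + (Im lam * Q)\<^sup>2) / 2"
    unfolding Re_lam_z by (rule divide_right_mono) simp
  have "P\<^sup>2 \<le> (\<rho> + inverse \<rho>)\<^sup>2"
    using plus_inverse_le_plus_inverse_iff[of "cmod u" \<rho>] u(2) \<open>cmod u \<le> \<rho>\<close>
    by (intro power_mono) (auto simp: P_def)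
  moreover have "Q\<^sup>2 \<le> (\<rho> - inverse \<rho>)\<^sup>2"
  proof -
    have "inverse \<rho> \<le> inverse (cmod u)"
      using u(2) \<open>cmod u \<le> \<rho>\<close> by (intro le_imp_inverse_le) auto
    moreover have "inverse (cmod u) \<le> 1"
      using le_imp_inverse_le[OF u(2) zero_less_one] by simp
    ultimately have "0 \<le> Q" "Q \<le> \<rho> - inverse \<rho>"
      using u(2) \<open>cmod u \<le> \<rho>\<close> unfolding Q_def by linarith+
    then show ?thesis by (rule power_mono[rotated])
  qed
  ultimately have squares: "(- Re lam * P)\<^sup>2 + (Im lam * Q)\<^sup>2
           \<le> (Re lam)\<^sup>2 * (\<rho> + inverse \<rho>)\<^sup>2 + (Im lam)\<^sup>2 * (\<rho> - inverse \<rho>)\<^sup>2"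
    by (simp add: power_mult_distrib add_mono mult_left_mono)
  show ?thesis
    unfolding ellipse_exponent_def using CS real_sqrt_le_mono[OF squares] by linarith
qed

lemma norm_exp_cheb_series_le:
  fixes z lam :: complex and s \<rho> :: real
  assumes "1 \<le> \<rho>" "0 \<le> s" "s \<le> 1" "cmod (z - 1) + cmod (z + 1) \<le> \<rho> + inverse \<rho>"
  shows "cmod (of_real s * exp (lam * of_real s * (1 - z)) * cheb_series K c (of_real s * (z + 1) - 1))
           \<le> s * exp (Re lam + ellipse_exponent \<rho> lam)
               * (cmod (c 0) + (\<Sum>k=1..K. cmod (c k) * (\<rho> ^ k + inverse \<rho> ^ k)))"
proof -
  have "Re (lam * of_real s * (1 - z)) = s * (Re lam - Re (lam * z))"
    by (simp add: algebra_simps)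
  also have "\<dots> \<le> s * (Re lam + ellipse_exponent \<rho> lam)"
    using neg_Re_mult_le_ellipse_exponent[OF assms(1,4)] assms(2) by (intro mult_left_mono) auto
  also have "\<dots> \<le> Re lam + ellipse_exponent \<rho> lam"
    using abs_Re_le_ellipse_exponent[OF assms(1), of lam] assms(2,3)
    by (intro mult_left_le_one_le) (auto simp: abs_le_iff)
  finally have "exp (Re (lam * of_real s * (1 - z))) \<le> exp (Re lam + ellipse_exponent \<rho> lam)"
    by simp
  with norm_cheb_series_le[OF assms(1) focal_sum_contraction_le[OF assms]] assms(2) show ?thesis
    by (simp add: norm_mult norm_exp_eq_Re mult_mono)
qed

theorem lemmaC3:
  fixes \<rho> t :: real and lam :: complex and K :: nat and c :: "nat \<Rightarrow> complex"
  assumes "\<rho> \<ge> 1" and "-1 \<le> t" and "t \<le> 1"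
  shows "(SUP z\<in>bernstein_ellipse \<rho>.
            ereal (cmod (complex_of_real ((t + 1) / 2)
              * exp (lam / 2 * complex_of_real (t + 1) * (1 - z))
              * cheb_series K c (complex_of_real ((t + 1) / 2) * (z + 1) - 1))))
         \<le> ereal ((t + 1) / 2
              * exp (Re lam + sqrt ((Re lam)\<^sup>2 * (\<rho> + inverse \<rho>)\<^sup>2
                                   + (Im lam)\<^sup>2 * (\<rho> - inverse \<rho>)\<^sup>2) / 2)
              * (cmod (c 0) + (\<Sum>k=1..K. cmod (c k) * (\<rho> ^ k + inverse \<rho> ^ k))))"
  using assms norm_exp_cheb_series_le[OF assms(1), where s = "(t + 1) / 2"]
  by (intro SUP_least) (simp add: bernstein_ellipse_def ellipse_exponent_def less_imp_le)

end
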